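(* Let $X$ be a quantity space over a field $K$. (1) If $B=\{b_1,\ldots,b_n\}$ is a basis for $X$, then $B^*=\{[b_1],\ldots,[b_n]\}$ is a basis for the abelian group $X/{\sim}$, and $b_i\mapsto[b_i]$ is injective, so $B^*$ has the same cardinality as $B$. (2) Conversely, if $b_1,\ldots,b_n\in X$ are invertible and $B^*=\{[b_1],\ldots,[b_n]\}$ is a basis for $X/{\sim}$ with $[b_i]\neq[b_j]$ for $i\ne j$, then $B=\{b_1,\ldots,b_n\}$ is a basis for $X$ with the same cardinality as $B^*$.
   Context: A scalable monoid over a field $K$ is a monoid $X$ (written multiplicatively, unit $\mathbf{1}=1_X$) with a map $K\times X\to X$, $(\alpha,x)\mapsto\alpha x$, such that $1x=x$, $\alpha(\beta x)=(\alpha\beta)x$, and $\alpha(xy)=(\alpha x)y=x(\alpha y)$ for all $\alpha,\beta\in K$, $x,y\in X$. It is commutative if $xy=yx$ for all $x,y$. For invertible $b$, $b^0=\mathbf{1}$ and negative powers are powers of $b^{-1}$. A (finite) basis of a commutative scalable monoid $X$ over $K$ is a finite set $B=\{b_1,\ldots,b_n\}$ of invertible elements of $X$ such that every $x\in X$ has an expansion $x=\mu\prod_{i=1}^n b_i^{k_i}$ with $\mu\in K$ and $k_1,\ldots,k_n\in\mathbb{Z}$, and this expansion is unique (i.e. $\mu$ and $(k_1,\ldots,k_n)$ are uniquely determined by $x$). A quantity space over $K$ is a commutative scalable monoid over $K$ that has a finite basis. Elements $x,y$ are commensurable, $x\sim y$, if $\alpha x=\beta y$ for some $\alpha,\beta\in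 K$; this is an equivalence relation and a congruence, its classes are called realms (dimensions), $[x]$ is the realm of $x$, and $X/{\sim}$ is the set of realms with product $[x][y]=[xy]$ and unit $[\mathbf{1}]$; for a quantity space this is a commutative monoid in which every element has an inverse, i.e. an abelian group. A basis of the abelian group $X/{\sim}$ is a finite set $\{c_1,\ldots,c_n\}\subseteq X/{\sim}$ such that every element of $X/{\sim}$ can be written uniquely as $\prod_{i=1}^n c_i^{k_i}$ with $k_i\in\mathbb{Z}$. *)

theory Defs
  imports "HOL-Algebra.Algebra"
begin

text \<open>The quantity space X is the type 'x (a commutative monoid, class comm_monoid_mult),
  with a scalar action smul of a field 'k.\<close>

definition scalable_monoid :: "('k::field \<Rightarrow> 'x::comm_monoid_mult \<Rightarrow> 'x) \<Rightarrow> bool" where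
  "scalable_monoid smul \<longleftrightarrow>
     (\<forall>x. smul 1 x = x) \<and>
     (\<forall>\<alpha> \<beta> x. smul \<alpha> (smul \<beta> x) = smul (\<alpha> * \<beta>) x) \<and>
     (\<forall>\<alpha> x y. smul \<alpha> (x * y) = (smul \<alpha> x) * y \<and> smul \<alpha> (x * y) = x * (smul \<alpha> y))"

definition invertible :: "'x::monoid_mult \<Rightarrow> bool" where
  "invertible x \<longleftrightarrow> (\<exists>y. x * y = 1 \<and> y * x = 1)"

definition qinv :: "'x::monoid_mult \<Rightarrow> 'x" where
  "qinv x = (THE y. x * y = 1 \<and> y * x = 1)"

definition zpow :: "'x::monoid_mult \<Rightarrow> int \<Rightarrow> 'x" where
  "zpow x k = (if 0 \<le> k then x ^ nat k else (qinv x) ^ nat (- k))"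

definition qbasis :: "('k::field \<Rightarrow> 'x::comm_monoid_mult \<Rightarrow> 'x) \<Rightarrow> 'x set \<Rightarrow> bool" where
  "qbasis smul B \<longleftrightarrow> finite B \<and> (\<forall>b\<in>B. invertible b) \<and>
     (\<forall>x. \<exists>!p :: 'k \<times> ('x \<Rightarrow> int).
         (\<forall>b. b \<notin> B \<longrightarrow> snd p b = 0) \<and> x = smul (fst p) (\<Prod>b\<in>B. zpow b (snd p b)))"

definition quantity_space :: "('k::field \<Rightarrow> 'x::comm_monoid_mult \<Rightarrow> 'x) \<Rightarrow> bool" where
  "quantity_space smul \<longleftrightarrow> scalable_monoid smul \<and> (\<exists>B. qbasis smul B)"

definition commensurable :: "('k::field \<Rightarrow> 'x::comm_monoid_mult \<Rightarrow> 'x) \<Rightarrow> 'x \<Rightarrow> 'x \<Rightarrow> bool" where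
  "commensurable smul x y \<longleftrightarrow> (\<exists>\<alpha> \<beta>. smul \<alpha> x = smul \<beta> y)"

definition realm :: "('k::field \<Rightarrow> 'x::comm_monoid_mult \<Rightarrow> 'x) \<Rightarrow> 'x \<Rightarrow> 'x set" where
  "realm smul x = {y. commensurable smul x y}"

definition realms :: "('k::field \<Rightarrow> 'x::comm_monoid_mult \<Rightarrow> 'x) \<Rightarrow> 'x set monoid" where
  "realms smul = \<lparr> carrier = range (realm smul),
      monoid.mult = (\<lambda>A B. realm smul ((SOME a. a \<in> A) * (SOME b. b \<in> B))),
      monoid.one = realm smul 1 \<rparr>"

definition group_basis :: "('a, 'm) monoid_scheme \<Rightarrow> 'a set \<Rightarrow> bool" where
  "group_basis G C \<longleftrightarrow> finite C \<and> C \<subseteq> carrier G \<and>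
     (\<forall>g\<in>carrier G. \<exists>!k :: 'a \<Rightarrow> int. (\<forall>c. c \<notin> C \<longrightarrow> k c = 0) \<and>
         g = finprod G (\<lambda>c. c [^]\<^bsub>G\<^esub> k c) C)"

end

theory Submission
  imports Defs
begin

text \<open>Fix a basis C. Every x then has coordinates: a scalar and an integer exponent vector on C.
  Multiplication adds exponent vectors and scalars leave them unchanged, and x \<sim> y holds exactly
  when x and y have the same exponent vector, so X/\<sim> is the free abelian group of exponent
  vectors. Part (1) says that the unit vectors form a basis of it. For part (2), a basis
  [b1], \<dots>, [bn] of X/\<sim> makes every x commensurable with a unique monomial in the
  bi; that monomial is invertible, hence has a nonzero scalar coordinate, and this fixes the
  scalar in the expansion of x.\<close>

lemma invertible_qinv:
  assumes "invertible (b::'x::monoid_mult)"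
  shows "b * qinv b = 1" and "qinv b * b = 1"
proof -
  obtain y where y: "b * y = 1" "y * b = 1"
    using assms unfolding invertible_def by blast
  have "\<exists>!y. b * y = 1 \<and> y * b = 1"
    using y by (metis mult.assoc mult_1_left)
  then have "b * qinv b = 1 \<and> qinv b * b = 1"
    unfolding qinv_def by (rule theI')
  then show "b * qinv b = 1" and "qinv b * b = 1" by auto
qed

lemma zpow_0 [simp]: "zpow b 0 = 1"
  by (simp add: zpow_def)

lemma zpow_1 [simp]: "zpow b 1 = b"
  by (simp add: zpow_def)

lemma zpow_add1:
  assumes "invertible (b::'x::monoid_mult)"
  shows "zpow b (n + 1) = zpow b n * b"
proof (cases "n \<ge> 0")
  case True
  then show ?thesis
    unfolding zpow_def by (simp add: nat_add_distrib power_commutes)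
next
  case False
  then obtain m where m: "n = - int m - 1"
    by (intro that[of "nat (- n - 1)"]) simp
  have "zpow b n * b = qinv b ^ Suc m * b"
    using m unfolding zpow_def by (simp add: nat_add_distrib)
  also have "\<dots> = qinv b ^ m * (qinv b * b)"
    by (simp only: power_Suc2 mult.assoc)
  also have "\<dots> = zpow b (n + 1)"
    using m unfolding zpow_def by (simp add: invertible_qinv[OF assms])
  finally show ?thesis ..
qed

lemma zpow_add:
  assumes "invertible (b::'x::monoid_mult)"
  shows "zpow b (m + n) = zpow b m * zpow b n"
proof (induction n rule: int_induct[where k = 0])
  case (step1 i)
  then show ?case
    using zpow_add1[OF assms] by (metis add.assoc mult.assoc)
next
  case (step2 i)
  have "zpow b (m + i - 1) * b = zpow b m * (zpow b (i - 1) * b)"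
    using step2.IH zpow_add1[OF assms, of "m + i - 1"] zpow_add1[OF assms, of "i - 1"]
    by (simp add: mult.assoc)
  then show ?case
    using invertible_qinv[OF assms] by (metis add_diff_eq mult.assoc mult_1_right)
qed simp

lemma invertible_zpow:
  assumes "invertible (b::'x::monoid_mult)"
  shows "invertible (zpow b n)"
  unfolding invertible_def
  using zpow_add[OF assms, of n "- n"] zpow_add[OF assms, of "- n" n] by auto

lemma invertible_mult:
  "invertible (x::'x::comm_monoid_mult) \<Longrightarrow> invertible y \<Longrightarrow> invertible (x * y)"
  unfolding invertible_def by (metis mult.assoc mult.commute mult_1_right)

lemma invertible_prod:
  "finite A \<Longrightarrow> (\<And>a. a \<in> A \<Longrightarrow> invertible (f a :: 'x::comm_monoid_mult))
    \<Longrightarrow> invertible (prod f A)"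
proof (induction A rule: finite_induct)
  case empty
  show ?case unfolding invertible_def by simp
next
  case (insert a A)
  then show ?case by (simp add: invertible_mult)
qed

lemma ex1_bijection_cong:
  assumes "\<And>x. P x \<Longrightarrow> Q (h x)" and "\<And>y. Q y \<Longrightarrow> P (h' y)"
    and "\<And>x. P x \<Longrightarrow> h' (h x) = x" and "\<And>y. Q y \<Longrightarrow> h (h' y) = y"
  shows "(\<exists>!x. P x) \<longleftrightarrow> (\<exists>!y. Q y)"
  using assms by metis

lemma group_basis_image_iff:
  assumes G: "comm_group G" and "finite B" and inj: "inj_on f B" and "f ` B \<subseteq> carrier G"
  shows "group_basis G (f ` B) \<longleftrightarrow>
    (\<forall>g\<in>carrier G. \<exists>!k :: 'b \<Rightarrow> int.
        (\<forall>b. b \<notin> B \<longrightarrow> k b = 0) \<and> g = finprod G (\<lambda>b. f b [^]\<^bsub>G\<^esub> k b) B)"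
proof -
  interpret comm_group G by (rule G)
  define lift where "lift \<kappa> b = (if b \<in> B then \<kappa> (f b) else 0)" for \<kappa> :: "_ \<Rightarrow> int" and b
  define drop where "drop k c = (if c \<in> f ` B then k (inv_into B f c) else 0)"
    for k :: "_ \<Rightarrow> int" and c
  have finprod_lift:
    "finprod G (\<lambda>c. c [^]\<^bsub>G\<^esub> \<kappa> c) (f ` B) = finprod G (\<lambda>b. f b [^]\<^bsub>G\<^esub> lift \<kappa> b) B" for \<kappa>
  proof -
    have "finprod G (\<lambda>c. c [^]\<^bsub>G\<^esub> \<kappa> c) (f ` B)
        = finprod G (\<lambda>b. f b [^]\<^bsub>G\<^esub> \<kappa> (f b)) B"
      using assms by (intro finprod_reindex) auto
    also have "\<dots> = finprod G (\<lambda>b. f b [^]\<^bsub>G\<^esub> lift \<kappa> b) B"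
      using assms by (intro finprod_cong) (auto simp: lift_def)
    finally show ?thesis .
  qed
  have lift_support: "b \<notin> B \<Longrightarrow> lift \<kappa> b = 0" for \<kappa> b
    by (simp add: lift_def)
  have drop_support: "c \<notin> f ` B \<Longrightarrow> drop k c = 0" for k c
    by (simp add: drop_def)
  have drop_lift: "drop (lift \<kappa>) = \<kappa>" if "\<forall>c. c \<notin> f ` B \<longrightarrow> \<kappa> c = 0" for \<kappa>
    using that by (auto simp: fun_eq_iff lift_def drop_def f_inv_into_f inv_into_into)
  have lift_drop: "lift (drop k) = k" if "\<forall>b. b \<notin> B \<longrightarrow> k b = 0" for k
    using that inj by (auto simp: fun_eq_iff lift_def drop_def)
  have "(\<exists>!\<kappa> :: _ \<Rightarrow> int. (\<forall>c. c \<notin> f ` B \<longrightarrow> \<kappa> c = 0) \<and>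
        g = finprod G (\<lambda>c. c [^]\<^bsub>G\<^esub> \<kappa> c) (f ` B))
    \<longleftrightarrow> (\<exists>!k :: _ \<Rightarrow> int. (\<forall>b. b \<notin> B \<longrightarrow> k b = 0) \<and>
        g = finprod G (\<lambda>b. f b [^]\<^bsub>G\<^esub> k b) B)" for g
    by (rule ex1_bijection_cong[of _ _ lift drop])
      (simp_all add: finprod_lift lift_drop drop_lift lift_support drop_support)
  then show ?thesis
    using assms by (simp add: group_basis_def)
qed

locale quantity_space_basis =
  fixes smul :: "'k::field \<Rightarrow> 'x::comm_monoid_mult \<Rightarrow> 'x" and C :: "'x set"
  assumes scalable: "scalable_monoid smul" and basis: "qbasis smul C"
begin

lemma smul_one: "smul 1 x = x"
  and smul_smul: "smul \<alpha> (smul \<beta> x) = smul (\<alpha> * \<beta>) x"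
  and smul_mult_left: "smul \<alpha> (x * y) = smul \<alpha> x * y"
  and smul_mult_right: "smul \<alpha> (x * y) = x * smul \<alpha> y"
  using scalable unfolding scalable_monoid_def by blast+

lemma finite_basis: "finite C"
  and invertible_basis: "b \<in> C \<Longrightarrow> invertible b"
  using basis unfolding qbasis_def by auto

definition monomial :: "('x \<Rightarrow> int) \<Rightarrow> 'x" where
  "monomial k = (\<Prod>b\<in>C. zpow b (k b))"

definition coordinates :: "'x \<Rightarrow> 'k \<times> ('x \<Rightarrow> int)" where
  "coordinates x = (THE p. (\<forall>b. b \<notin> C \<longrightarrow> snd p b = 0) \<and> x = smul (fst p) (monomial (snd p)))"

definition qcoeff :: "'x \<Rightarrow> 'k" where
  "qcoeff x = fst (coordinates x)"

definition qexps :: "'x \<Rightarrow> 'x \<Rightarrow> int" where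
  "qexps x = snd (coordinates x)"

lemma ex1_coordinates:
  "\<exists>!p. (\<forall>b. b \<notin> C \<longrightarrow> snd p b = 0) \<and> x = smul (fst p) (monomial (snd p))"
  using basis unfolding qbasis_def monomial_def by blast

lemma qexps_outside: "b \<notin> C \<Longrightarrow> qexps x b = 0"
  and expansion: "x = smul (qcoeff x) (monomial (qexps x))"
  using theI'[OF ex1_coordinates[of x]]
  unfolding qcoeff_def qexps_def coordinates_def by auto

lemma coordinates_unique:
  assumes "\<forall>b. b \<notin> C \<longrightarrow> k b = 0" and "x = smul \<mu> (monomial k)"
  shows "qcoeff x = \<mu>" and "qexps x = k"
proof -
  have "coordinates x = (\<mu>, k)"
    unfolding coordinates_def by (rule the1_equality[OF ex1_coordinates]) (use assms in simp)
  then show "qcoeff x = \<mu>" and "qexps x = k"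
    unfolding qcoeff_def qexps_def by simp_all
qed

lemma monomial_add: "monomial (\<lambda>b. k b + l b) = monomial k * monomial l"
  unfolding monomial_def by (simp add: zpow_add invertible_basis prod.distrib)

lemma qexps_monomial: "\<forall>b. b \<notin> C \<longrightarrow> k b = 0 \<Longrightarrow> qexps (monomial k) = k"
  using coordinates_unique(2)[of k _ 1] by (simp add: smul_one)

lemma smul_expansion: "smul \<alpha> x = smul (\<alpha> * qcoeff x) (monomial (qexps x))"
proof -
  have "smul \<alpha> x = smul \<alpha> (smul (qcoeff x) (monomial (qexps x)))"
    by (rule arg_cong[OF expansion])
  then show ?thesis
    by (simp only: smul_smul)
qed

lemma qexps_smul: "qexps (smul \<alpha> x) = qexps x"
  and qcoeff_smul: "qcoeff (smul \<alpha> x) = \<alpha> * qcoeff x"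
proof -
  note smul_expansion[of \<alpha> x]
  then show "qexps (smul \<alpha> x) = qexps x" and "qcoeff (smul \<alpha> x) = \<alpha> * qcoeff x"
    using coordinates_unique qexps_outside by blast+
qed

lemma qexps_mult: "qexps (x * y) = (\<lambda>b. qexps x b + qexps y b)"
  and qcoeff_mult: "qcoeff (x * y) = qcoeff x * qcoeff y"
proof -
  have "x * y = smul (qcoeff x) (monomial (qexps x)) * smul (qcoeff y) (monomial (qexps y))"
    using expansion by metis
  also have "\<dots> = smul (qcoeff x * qcoeff y) (monomial (\<lambda>b. qexps x b + qexps y b))"
    by (simp add: smul_mult_left[symmetric] smul_mult_right[symmetric] smul_smul monomial_add
        mult.commute[of "qcoeff x"])
  finally show "qexps (x * y) = (\<lambda>b. qexps x b + qexps y b)"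
    and "qcoeff (x * y) = qcoeff x * qcoeff y"
    using coordinates_unique by (simp_all add: qexps_outside)
qed

lemma qcoeff_one: "qcoeff 1 = 1"
  and qexps_one: "qexps 1 = (\<lambda>_. 0)"
  using coordinates_unique[of "\<lambda>_. 0" 1 1] by (simp_all add: monomial_def smul_one)

lemma qcoeff_invertible_nonzero: "invertible y \<Longrightarrow> qcoeff y \<noteq> 0"
proof
  assume "invertible y" and "qcoeff y = 0"
  then obtain z where "y * z = 1"
    unfolding invertible_def by blast
  then have "qcoeff y * qcoeff z = 1"
    using qcoeff_mult[of y z] by (simp add: qcoeff_one)
  with \<open>qcoeff y = 0\<close> show False
    by simp
qed

lemma smul_cancel_invertible:
  assumes "smul \<mu> y = smul \<nu> y" and "invertible y"
  shows "\<mu> = \<nu>"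
  using arg_cong[OF assms(1), of qcoeff] qcoeff_invertible_nonzero[OF assms(2)]
  by (simp add: qcoeff_smul)

lemma realm_eq_qexps: "realm smul x = {y. qexps y = qexps x}"
proof -
  have "commensurable smul x y \<longleftrightarrow> qexps y = qexps x" for y
  proof
    assume "commensurable smul x y"
    then obtain \<alpha> \<beta> where "smul \<alpha> x = smul \<beta> y"
      unfolding commensurable_def by blast
    then show "qexps y = qexps x"
      using qexps_smul by metis
  next
    assume "qexps y = qexps x"
    then have "smul (qcoeff y) x = smul (qcoeff x) y"
      using smul_expansion[of "qcoeff y" x] smul_expansion[of "qcoeff x" y]
      by (simp add: mult.commute)
    then show "commensurable smul x y"
      unfolding commensurable_def by blast
  qed
  then show ?thesis
    unfolding realm_def by blast
qed

lemma realm_eq_iff: "realm smul x = realm smul y \<longleftrightarrow> qexps x = qexps y"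
proof
  assume "realm smul x = realm smul y"
  moreover have "x \<in> realm smul x"
    by (simp add: realm_eq_qexps)
  ultimately show "qexps x = qexps y"
    by (simp add: realm_eq_qexps)
qed (simp add: realm_eq_qexps)

lemma realm_smul: "realm smul (smul \<alpha> x) = realm smul x"
  by (simp add: realm_eq_iff qexps_smul)

lemma eq_smul_if_realm_eq:
  assumes "realm smul x = realm smul y" and "invertible y"
  shows "x = smul (qcoeff x / qcoeff y) y"
proof -
  have "smul (qcoeff x / qcoeff y) y = smul (qcoeff x / qcoeff y * qcoeff y) (monomial (qexps x))"
    using assms(1) smul_expansion[of _ y] by (simp add: realm_eq_iff)
  also have "\<dots> = x"
    using qcoeff_invertible_nonzero[OF assms(2)] expansion[of x] by simp
  finally show ?thesis ..
qed

lemma realms_carrier: "carrier (realms smul) = range (realm smul)"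
  by (simp add: realms_def)

lemma realm_in_carrier: "realm smul x \<in> carrier (realms smul)"
  by (simp add: realms_carrier)

lemma realms_mult: "realm smul x \<otimes>\<^bsub>realms smul\<^esub> realm smul y = realm smul (x * y)"
proof -
  \<comment> \<open>Realms are multiplied through chosen representatives; every representative
    of a realm has the same exponent vector, so the choice is irrelevant.\<close>
  have "qexps (SOME a. a \<in> realm smul x) = qexps x" for x
    using someI[of "\<lambda>a. a \<in> realm smul x" x] by (simp add: realm_eq_qexps)
  then show ?thesis
    by (simp add: realms_def realm_eq_iff qexps_mult)
qed

lemma realms_one: "\<one>\<^bsub>realms smul\<^esub> = realm smul 1"
  by (simp add: realms_def)

lemma comm_group_realms: "comm_group (realms smul)"
proof (rule comm_groupI)
  fix g assume "g \<in> carrier (realms smul)"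
  then obtain x where x: "g = realm smul x"
    by (auto simp: realms_carrier)
  let ?y = "monomial (\<lambda>b. - qexps x b)"
  have "qexps (?y * x) = qexps 1"
    by (simp add: qexps_mult qexps_monomial qexps_outside qexps_one)
  then have "realm smul ?y \<otimes>\<^bsub>realms smul\<^esub> g = \<one>\<^bsub>realms smul\<^esub>"
    by (simp add: x realms_mult realms_one realm_eq_iff)
  then show "\<exists>h\<in>carrier (realms smul). h \<otimes>\<^bsub>realms smul\<^esub> g = \<one>\<^bsub>realms smul\<^esub>"
    using realm_in_carrier by blast
qed (auto simp: realms_carrier realms_mult realms_one realm_eq_iff qexps_mult ac_simps)

lemma realm_prod:
  "finite A \<Longrightarrow> realm smul (\<Prod>a\<in>A. f a) = finprod (realms smul) (\<lambda>a. realm smul (f a)) A"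
proof (induction A rule: finite_induct)
  case empty
  interpret comm_group "realms smul" by (rule comm_group_realms)
  show ?case
    by (simp add: realms_one)
next
  case (insert a A)
  interpret comm_group "realms smul" by (rule comm_group_realms)
  have "finprod (realms smul) (\<lambda>a. realm smul (f a)) (insert a A)
    = realm smul (f a) \<otimes>\<^bsub>realms smul\<^esub> finprod (realms smul) (\<lambda>a. realm smul (f a)) A"
    using insert.hyps by (simp add: finprod_insert realm_in_carrier Pi_def)
  then show ?case
    using insert.hyps by (simp add: insert.IH [symmetric] realms_mult)
qed

lemma realm_zpow:
  assumes "invertible b"
  shows "realm smul (zpow b n) = realm smul b [^]\<^bsub>realms smul\<^esub> n"
proof -
  interpret comm_group "realms smul" by (rule comm_group_realms)
  have step:
    "realm smul (zpow b (n + 1)) = realm smul (zpow b n) \<otimes>\<^bsub>realms smul\<^esub> realm smul b" for n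
    by (simp add: zpow_add1[OF assms] realms_mult)
  have pow_step: "realm smul b [^]\<^bsub>realms smul\<^esub> (n + 1)
      = realm smul b [^]\<^bsub>realms smul\<^esub> n \<otimes>\<^bsub>realms smul\<^esub> realm smul b" for n :: int
    using int_pow_mult[OF realm_in_carrier, of b n 1] by (simp add: realm_in_carrier)
  show ?thesis
  proof (induction n rule: int_induct[where k = 0])
    case (step2 i)
    then show ?case
      using step[of "i - 1"] pow_step[of "i - 1"] by (simp add: realm_in_carrier)
  qed (simp_all add: realms_one step pow_step)
qed

lemma realm_prod_zpow:
  assumes "finite B" and "\<And>b. b \<in> B \<Longrightarrow> invertible b"
  shows "realm smul (\<Prod>b\<in>B. zpow b (k b))
    = finprod (realms smul) (\<lambda>b. realm smul b [^]\<^bsub>realms smul\<^esub> k b) B"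
proof -
  interpret comm_group "realms smul" by (rule comm_group_realms)
  show ?thesis
    using assms by (simp add: realm_prod realm_zpow realm_in_carrier cong: finprod_cong)
qed

lemma group_basis_realms_iff:
  assumes "finite B" and "\<And>b. b \<in> B \<Longrightarrow> invertible b" and "inj_on (realm smul) B"
  shows "group_basis (realms smul) (realm smul ` B) \<longleftrightarrow>
    (\<forall>x. \<exists>!k :: 'x \<Rightarrow> int. (\<forall>b. b \<notin> B \<longrightarrow> k b = 0) \<and>
        realm smul x = realm smul (\<Prod>b\<in>B. zpow b (k b)))"
  using assms
  by (simp add: group_basis_image_iff comm_group_realms realm_in_carrier image_subsetI
      realms_carrier realm_prod_zpow)

lemma qexps_basis_element:
  assumes "b \<in> C"
  shows "qexps b = (\<lambda>c. if c = b then 1 else 0)"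
proof -
  have "monomial (\<lambda>c. if c = b then 1 else 0) = b"
    using assms finite_basis unfolding monomial_def
    by (simp add: if_distrib prod.delta cong: if_cong)
  then show ?thesis
    using assms qexps_monomial[of "\<lambda>c. if c = b then 1 else 0"] by auto
qed

lemma inj_on_realm_basis: "inj_on (realm smul) C"
proof (rule inj_onI)
  fix a b
  assume "a \<in> C" and "b \<in> C" and "realm smul a = realm smul b"
  then have "qexps b a = qexps a a"
    by (simp add: realm_eq_iff)
  also have "\<dots> = 1"
    using \<open>a \<in> C\<close> by (simp add: qexps_basis_element)
  finally show "a = b"
    using \<open>b \<in> C\<close> by (simp add: qexps_basis_element split: if_splits)
qed

lemma group_basis_realms_basis: "group_basis (realms smul) (realm smul ` C)"
proof -
  have "\<exists>!k. (\<forall>b. b \<notin> C \<longrightarrow> k b = 0) \<and> realm smul x = realm smul (monomial k)" for x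
  proof (rule ex1I [of _ "qexps x"])
    show "(\<forall>b. b \<notin> C \<longrightarrow> qexps x b = 0) \<and> realm smul x = realm smul (monomial (qexps x))"
      by (simp add: qexps_outside realm_eq_iff qexps_monomial)
    show "k = qexps x"
      if "(\<forall>b. b \<notin> C \<longrightarrow> k b = 0) \<and> realm smul x = realm smul (monomial k)" for k
      using that by (simp add: realm_eq_iff qexps_monomial)
  qed
  then show ?thesis
    using group_basis_realms_iff[OF finite_basis invertible_basis inj_on_realm_basis]
    unfolding monomial_def by simp
qed

lemma qbasis_if_group_basis_realms:
  assumes fin: "finite B" and inv: "\<And>b. b \<in> B \<Longrightarrow> invertible b"
    and inj: "inj_on (realm smul) B" and "group_basis (realms smul) (realm smul ` B)"
  shows "qbasis smul B"
proof -
  let ?P = "\<lambda>k. \<Prod>b\<in>B. zpow b (k b)"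
  have unique_realm: "\<forall>x. \<exists>!k. (\<forall>b. b \<notin> B \<longrightarrow> k b = 0) \<and> realm smul x = realm smul (?P k)"
    using group_basis_realms_iff [OF fin inv inj] assms(4) by (rule iffD1)
  have invertible_P: "invertible (?P k)" for k
    using fin by (rule invertible_prod) (simp add: inv invertible_zpow)
  have "\<exists>!p :: 'k \<times> ('x \<Rightarrow> int). (\<forall>b. b \<notin> B \<longrightarrow> snd p b = 0) \<and> x = smul (fst p) (?P (snd p))"
    for x
  proof (rule ex_ex1I)
    obtain k where k: "\<forall>b. b \<notin> B \<longrightarrow> k b = 0" "realm smul x = realm smul (?P k)"
      using unique_realm by (meson ex1_implies_ex)
    with eq_smul_if_realm_eq[OF k(2) invertible_P]
    show "\<exists>p :: 'k \<times> ('x \<Rightarrow> int). (\<forall>b. b \<notin> B \<longrightarrow> snd p b = 0) \<and> x = smul (fst p) (?P (snd p))"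
      by (intro exI [of _ "(qcoeff x / qcoeff (?P k), k)"]) simp
  next
    fix p q :: "'k \<times> ('x \<Rightarrow> int)"
    assume p: "(\<forall>b. b \<notin> B \<longrightarrow> snd p b = 0) \<and> x = smul (fst p) (?P (snd p))"
      and q: "(\<forall>b. b \<notin> B \<longrightarrow> snd q b = 0) \<and> x = smul (fst q) (?P (snd q))"
    have "(\<forall>b. b \<notin> B \<longrightarrow> snd p b = 0) \<and> realm smul x = realm smul (?P (snd p))"
      using p by (simp add: realm_smul)
    moreover have "(\<forall>b. b \<notin> B \<longrightarrow> snd q b = 0) \<and> realm smul x = realm smul (?P (snd q))"
      using q by (simp add: realm_smul)
    ultimately have same_exps: "snd p = snd q"
      using unique_realm by (elim allE [of _ x] ex1E) blast
    with p q have "smul (fst p) (?P (snd p)) = smul (fst q) (?P (snd p))"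
      by simp
    then have "fst p = fst q"
      by (rule smul_cancel_invertible [OF _ invertible_P])
    with same_exps show "p = q"
      by (simp add: prod_eq_iff)
  qed
  then show ?thesis
    unfolding qbasis_def using fin inv by blast
qed

end

theorem mainTheorem14:
  fixes smul :: "'k::field \<Rightarrow> 'x::comm_monoid_mult \<Rightarrow> 'x"
  assumes "quantity_space smul"
  shows "(\<forall>B. qbasis smul B \<longrightarrow>
            group_basis (realms smul) (realm smul ` B) \<and> inj_on (realm smul) B \<and>
            card (realm smul ` B) = card B)
       \<and> (\<forall>B. finite B \<and> (\<forall>b\<in>B. invertible b) \<and>
            group_basis (realms smul) (realm smul ` B) \<and> inj_on (realm smul) B \<longrightarrow>
            qbasis smul B \<and> card B = card (realm smul ` B))"
proof -
  obtain C where scalable: "scalable_monoid smul" and "qbasis smul C"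
    using assms unfolding quantity_space_def by blast
  then interpret quantity_space_basis smul C
    by unfold_locales
  show ?thesis
  proof (intro conjI allI impI)
    fix B
    assume "qbasis smul B"
    with scalable interpret B: quantity_space_basis smul B
      by unfold_locales
    show "group_basis (realms smul) (realm smul ` B)"
      by (rule B.group_basis_realms_basis)
    show "inj_on (realm smul) B"
      by (rule B.inj_on_realm_basis)
    then show "card (realm smul ` B) = card B"
      by (rule card_image)
  next
    fix B
    assume B: "finite B \<and> (\<forall>b\<in>B. invertible b) \<and>
      group_basis (realms smul) (realm smul ` B) \<and> inj_on (realm smul) B"
    then show "qbasis smul B"
      using qbasis_if_group_basis_realms by blast
    show "card B = card (realm smul ` B)"
      using B by (simp add: card_image)
  qed
qed

end
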